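(* (a) Let $n=1$ and let $m,\hat m\in A_1$ be monomials with multi-degrees $(r,s)$ and $(\hat r,\hat s)$. (a1) If $[m,\hat m]=0$ then $s\hat r=r\hat s$. (a2) If $\hat r=\hat s\neq0$ and $[m,\hat m]=0$, then $r=s$. (b) Let $m,\hat m\in A_n$ be monomials with multi-degrees $(\alpha,\beta)$ and $(\hat\alpha,\hat\beta)$. (b1) If $[m,\hat m]=0$ then $\beta_j\hat\alpha_j=\alpha_j\hat\beta_j$ for all $j\in\{1,\dots,n\}$. (b2) If $\hat\alpha=\hat\beta$ and $[m,\hat m]=0$, then $\alpha_j=\beta_j$ for every index $j$ with $\hat\alpha_j\neq0$. (c) Let $m,\tilde m\in A_n$ be monomials with multi-degrees $(\alpha,\beta)$ and $(\tilde\alpha,\tilde\alpha)$. Then $[m,\tilde m]=0$ if and only if $\alpha_j=\beta_j$ for every index $j$ with $\tilde\alpha_j\neq0$.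
   Context: Fix $n\ge 1$. The Weyl algebra $A_n$ is the unital associative $\mathbb{C}$-algebra generated by $a_1,\dots,a_n,a_1^\dagger,\dots,a_n^\dagger$ subject to $[a_i,a_j^\dagger]=\delta_{ij}$ and $[a_i,a_j]=[a_i^\dagger,a_j^\dagger]=0$, where $[x,y]=xy-yx$. A monomial is a finite product (in any order) of the generators $a_j,a_j^\dagger$; its multi-degree $\mathrm{mdeg}(m)=(\alpha,\beta)\in\mathbb N_0^{2n}$ records the number $\alpha_j$ of factors $a_j^\dagger$ and the number $\beta_j$ of factors $a_j$. *)

theory Defs
  imports Complex_Main
begin

text \<open>Generators of the Weyl algebra: Ann j is a_j, Cre j is a_j^dagger (indices from 0).
A monomial is a word (finite list) in the generators.\<close>
datatype gen = Ann nat | Cre nat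

definition gen_index :: "gen \<Rightarrow> nat" where
  "gen_index g = (case g of Ann j \<Rightarrow> j | Cre j \<Rightarrow> j)"

definition is_monomial :: "nat \<Rightarrow> gen list \<Rightarrow> bool" where
  "is_monomial n m \<longleftrightarrow> (\<forall>g \<in> set m. gen_index g < n)"

definition mdeg_alpha :: "gen list \<Rightarrow> nat \<Rightarrow> nat" where
  "mdeg_alpha m j = length (filter (\<lambda>g. g = Cre j) m)"

definition mdeg_beta :: "gen list \<Rightarrow> nat \<Rightarrow> nat" where
  "mdeg_beta m j = length (filter (\<lambda>g. g = Ann j) m)"

text \<open>Realisation of A_n in its standard faithful (Fock/Bargmann) representation:
formal power series given by coefficient functions (exponent vector \<Rightarrow> coefficient);
a_j^dagger acts as multiplication by x_j and a_j as d/dx_j.  Then [a_i, a_j^dagger] = delta_ij,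
and this representation of the Weyl algebra is faithful, so equality in A_n is equality
of operators.\<close>
type_synonym series = "(nat \<Rightarrow> nat) \<Rightarrow> complex"

fun gen_op :: "gen \<Rightarrow> series \<Rightarrow> series" where
  "gen_op (Cre j) f = (\<lambda>e. if e j = 0 then 0 else f (e(j := e j - 1)))"
| "gen_op (Ann j) f = (\<lambda>e. of_nat (e j + 1) * f (e(j := e j + 1)))"

fun weyl_op :: "gen list \<Rightarrow> series \<Rightarrow> series" where
  "weyl_op [] f = f"
| "weyl_op (g # gs) f = gen_op g (weyl_op gs f)"

definition weyl_comm :: "gen list \<Rightarrow> gen list \<Rightarrow> series \<Rightarrow> series" where
  "weyl_comm m m' f = (\<lambda>e. weyl_op m (weyl_op m' f) e - weyl_op m' (weyl_op m f) e)"

definition comm_zero :: "gen list \<Rightarrow> gen list \<Rightarrow> bool" where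
  "comm_zero m m' \<longleftrightarrow> (\<forall>f e. weyl_comm m m' f e = 0)"

end

(*
  A word m acts on coefficient functions by f |-> (e |-> c_m(e) * f(e + d_m)), where the shift is
  d_m = beta - alpha and, in each variable e_j, the multiplier c_m(e) is a product of beta_j linear
  factors e_j + k.  If m and m' commute, then c_m(e) c_m'(e + d_m) = c_m'(e) c_m(e + d_m') for all
  large e.  As polynomials in e_j both sides have the same roots; the roots of c_m' are translated
  by d_m,j on the left and those of c_m by d_m',j on the right, so comparing the sums of the roots
  gives beta'_j (beta_j - alpha_j) = beta_j (beta'_j - alpha'_j), which is (b1); (a2), (b2) and one
  half of (c) are its special case alpha'_j = beta'_j <> 0.  Conversely, a balanced word m'
  (alpha' = beta') acts diagonally, by a multiplier that only depends on the indices occurring in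
  m', and a word m that shifts none of these indices commutes with it.
*)

theory Submission
  imports Defs "HOL-Computational_Algebra.Polynomial"
begin

lemma gen_index_simps [simp]: "gen_index (Ann j) = j" "gen_index (Cre j) = j"
  by (simp_all add: gen_index_def)

definition exponent_shift :: "gen list \<Rightarrow> nat \<Rightarrow> int" where
  "exponent_shift m i = int (mdeg_beta m i) - int (mdeg_alpha m i)"

lemma exponent_shift_simps [simp]:
  "exponent_shift [] i = 0"
  "exponent_shift (Ann j # m) i = exponent_shift m i + (if i = j then 1 else 0)"
  "exponent_shift (Cre j # m) i = exponent_shift m i - (if i = j then 1 else 0)"
  by (auto simp: exponent_shift_def mdeg_alpha_def mdeg_beta_def)

lemma abs_exponent_shift_le: "\<bar>exponent_shift m i\<bar> \<le> int (length m)"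
  using length_filter_le[of "\<lambda>g. g = Cre i" m] length_filter_le[of "\<lambda>g. g = Ann i" m]
  unfolding exponent_shift_def mdeg_alpha_def mdeg_beta_def by linarith

text \<open>By \<open>weyl_op_eq\<close>, \<open>word_coeff m E\<close> is the multiplier c_m at the exponent E.  Exponents
are integers so that nothing is truncated: where an a_j^dagger lowers the j-th exponent below 0 the
operator gives 0, and so does \<open>word_coeff\<close> whenever the final exponent is non-negative, because on
the way back up some a_j contributes the factor \<open>E j + 1 = 0\<close> (\<open>word_coeff_eq_0_if_neg\<close>).\<close>

fun word_coeff :: "gen list \<Rightarrow> (nat \<Rightarrow> int) \<Rightarrow> int" where
  "word_coeff [] E = 1"
| "word_coeff (Cre j # m) E = word_coeff m (E(j := E j - 1))"
| "word_coeff (Ann j # m) E = (E j + 1) * word_coeff m (E(j := E j + 1))"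

lemma word_coeff_eq_0_if_neg:
  "E j < 0 \<Longrightarrow> 0 \<le> E j + exponent_shift m j \<Longrightarrow> word_coeff m E = 0"
proof (induction m arbitrary: E)
  case (Cons g m)
  then show ?case
    by (cases g) (auto intro!: Cons.IH split: if_splits)
qed simp

lemma weyl_op_eq:
  "weyl_op m f e = (if \<forall>i. 0 \<le> int (e i) + exponent_shift m i
     then of_int (word_coeff m (int \<circ> e)) * f (\<lambda>i. nat (int (e i) + exponent_shift m i))
     else 0)"
proof (induction m arbitrary: e)
  case (Cons g m)
  show ?case
  proof (cases g)
    case (Ann j)
    define e' where "e' = e(j := e j + 1)"
    have shift: "int (e' i) + exponent_shift m i = int (e i) + exponent_shift (g # m) i" for i
      by (simp add: e'_def Ann)
    have step: "weyl_op (g # m) f e = of_nat (e j + 1) * weyl_op m f e'"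
      by (simp add: Ann e'_def)
    have "int \<circ> e' = (int \<circ> e)(j := int (e j) + 1)"
      by (auto simp: e'_def fun_eq_iff)
    then have coeff: "word_coeff (g # m) (int \<circ> e) = (int (e j) + 1) * word_coeff m (int \<circ> e')"
      by (simp add: Ann)
    show ?thesis
      unfolding step coeff Cons.IH[of e'] shift by simp
  next
    case (Cre j)
    show ?thesis
    proof (cases "e j = 0")
      case True
      have "word_coeff m ((int \<circ> e)(j := -1)) = 0"
        if "\<forall>i. 0 \<le> int (e i) + exponent_shift (g # m) i"
        using that[rule_format, of j] True by (intro word_coeff_eq_0_if_neg[of _ j]) (simp_all add: Cre)
      with True show ?thesis
        by (simp add: Cre)
    next
      case False
      define e' where "e' = e(j := e j - 1)"
      have shift: "int (e' i) + exponent_shift m i = int (e i) + exponent_shift (g # m) i" for i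
        using False by (simp add: e'_def Cre)
      have step: "weyl_op (g # m) f e = weyl_op m f e'"
        using False by (simp add: Cre e'_def)
      have "int \<circ> e' = (int \<circ> e)(j := int (e j) - 1)"
        using False by (auto simp: e'_def fun_eq_iff)
      then have coeff: "word_coeff (g # m) (int \<circ> e) = word_coeff m (int \<circ> e')"
        by (simp add: Cre)
      show ?thesis
        unfolding step coeff Cons.IH[of e'] shift ..
    qed
  qed
qed simp

lemma word_coeff_pos: "\<forall>i. int (length m) \<le> E i \<Longrightarrow> 0 < word_coeff m E"
proof (induction m arbitrary: E)
  case (Cons g m)
  have IH: "0 < word_coeff m (E(j := E j + c))" if "-1 \<le> c" for j c
  proof (rule Cons.IH, rule allI)
    fix i
    show "int (length m) \<le> (E(j := E j + c)) i"
      using Cons.prems[rule_format, of i] Cons.prems[rule_format, of j] that by simp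
  qed
  have "0 < E j + 1" for j
    using Cons.prems[rule_format, of j] by simp
  then show ?case
    using IH[where c = 1] IH[where c = "-1"] by (cases g) simp_all
qed simp

lemma word_coeff_cong:
  "\<forall>i\<in>gen_index ` set m. E i = E' i \<Longrightarrow> word_coeff m E = word_coeff m E'"
proof (induction m arbitrary: E E')
  case (Cons g m)
  then show ?case
    by (cases g) (auto intro!: Cons.IH)
qed simp

text \<open>The factor of \<open>word_coeff m E\<close> contributed by an a_j is \<open>E j + k\<close>, where \<open>k - 1\<close> is the
net shift of the index j by the generators to its left.\<close>

fun ann_roots :: "gen list \<Rightarrow> nat \<Rightarrow> int list" where
  "ann_roots [] j = []"
| "ann_roots (Ann i # m) j = (if i = j then 1 # map (\<lambda>k. k + 1) (ann_roots m j) else ann_roots m j)"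
| "ann_roots (Cre i # m) j = (if i = j then map (\<lambda>k. k - 1) (ann_roots m j) else ann_roots m j)"

lemma length_ann_roots: "length (ann_roots m j) = mdeg_beta m j"
proof (induction m)
  case (Cons g m)
  then show ?case
    by (cases g) (auto simp: mdeg_beta_def)
qed (simp add: mdeg_beta_def)

lemma word_coeff_filter_fun_upd:
  "word_coeff (filter (\<lambda>g. gen_index g \<noteq> j) m) (E(j := x)) =
     word_coeff (filter (\<lambda>g. gen_index g \<noteq> j) m) E"
  by (rule word_coeff_cong) auto

lemma word_coeff_split_index:
  "word_coeff m E =
     word_coeff (filter (\<lambda>g. gen_index g \<noteq> j) m) E * (\<Prod>k\<leftarrow>ann_roots m j. E j + k)"
proof (induction m arbitrary: E)
  case (Cons g m)
  let ?rest = "word_coeff (filter (\<lambda>g. gen_index g \<noteq> j) m)"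
  obtain i c and d :: int where g: "g = Ann i \<and> c = E i + 1 \<and> d = 1 \<or> g = Cre i \<and> c = 1 \<and> d = -1"
    by (cases g) auto
  then have step: "word_coeff (g # m) E = c * word_coeff m (E(i := E i + d))"
    by auto
  show ?case
  proof (cases "i = j")
    case True
    have "word_coeff (g # m) E = c * (?rest E * (\<Prod>k\<leftarrow>ann_roots m j. E j + d + k))"
      unfolding step Cons.IH[of "E(i := E i + d)"] using True
      by (simp add: word_coeff_filter_fun_upd)
    then show ?thesis
      using g True by (auto simp: o_def algebra_simps)
  next
    case False
    have "word_coeff (g # m) E = c * ?rest (E(i := E i + d)) * (\<Prod>k\<leftarrow>ann_roots m j. E j + k)"
      unfolding step Cons.IH[of "E(i := E i + d)"] using False by simp
    then show ?thesis
      using g False by auto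
  qed
qed simp

lemma word_coeff_fun_upd:
  "word_coeff m (E(j := x)) =
     word_coeff (filter (\<lambda>g. gen_index g \<noteq> j) m) E * (\<Prod>k\<leftarrow>ann_roots m j. x + k)"
  by (subst word_coeff_split_index[where j = j]) (simp add: word_coeff_filter_fun_upd)

lemma mset_eq_if_linear_factors_eq:
  fixes A B :: "'a::idom" and K K' :: "'a list"
  assumes "infinite S" and "\<forall>x\<in>S. A * (\<Prod>k\<leftarrow>K. x + k) = B * (\<Prod>k\<leftarrow>K'. x + k)" and "A \<noteq> 0"
  shows "mset K = mset K'"
proof -
  define P where "P K = (\<Prod>k\<leftarrow>K. [:k, 1:])" for K :: "'a list"
  have P_nonzero: "P K \<noteq> 0" for K
    unfolding P_def prod_list_zero_iff by auto
  have proots_P: "proots (P K) = image_mset uminus (mset K)" for K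
    by (induction K) (simp_all add: P_def proots_mult P_nonzero[unfolded P_def] del: mult_pCons_left)
  have poly_P: "poly (P K) x = (\<Prod>k\<leftarrow>K. x + k)" for K x
    by (induction K) (simp_all add: P_def algebra_simps del: mult_pCons_left)
  define q where "q = smult A (P K) - smult B (P K')"
  have "S \<subseteq> {x. poly q x = 0}"
    using assms(2) by (auto simp: q_def poly_P)
  then have "q = 0"
    using assms(1) poly_roots_finite finite_subset by blast
  then have "smult A (P K) = smult B (P K')"
    by (simp add: q_def)
  moreover from this have "B \<noteq> 0"
    using assms(3) P_nonzero by auto
  ultimately have "image_mset uminus (mset K) = image_mset uminus (mset K')"
    using assms(3) proots_smult by (metis proots_P)
  then show ?thesis
    by (rule injD[OF multiset.inj_map[OF inj_uminus]])
qed

lemma weyl_op_weyl_op_large: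
  assumes "\<forall>i. length m + length m' \<le> e i"
  shows "weyl_op m (weyl_op m' f) e =
    of_int (word_coeff m (int \<circ> e) * word_coeff m' (\<lambda>i. int (e i) + exponent_shift m i)) *
    f (\<lambda>i. nat (int (e i) + exponent_shift m i + exponent_shift m' i))"
proof -
  define e' where "e' = (\<lambda>i. nat (int (e i) + exponent_shift m i))"
  have nonneg: "0 \<le> int (e i) + exponent_shift m i"
    "0 \<le> int (e i) + exponent_shift m i + exponent_shift m' i" for i
    using abs_exponent_shift_le[of m i] abs_exponent_shift_le[of m' i] assms[rule_format, of i]
    by linarith+
  then have e': "int (e' i) = int (e i) + exponent_shift m i" for i
    by (simp add: e'_def)
  have "weyl_op m g e = of_int (word_coeff m (int \<circ> e)) * g e'" for g
    using nonneg by (subst weyl_op_eq) (simp add: e'_def)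
  moreover have "weyl_op m' f e' =
      of_int (word_coeff m' (int \<circ> e')) * f (\<lambda>i. nat (int (e' i) + exponent_shift m' i))"
    using nonneg by (subst weyl_op_eq) (simp add: e')
  moreover have "int \<circ> e' = (\<lambda>i. int (e i) + exponent_shift m i)"
    using e' by auto
  ultimately show ?thesis
    by (simp add: e')
qed

lemma comm_zero_imp_word_coeff_eq:
  assumes "comm_zero m m'" and "\<forall>i. int (length m + length m') \<le> E i"
  shows "word_coeff m E * word_coeff m' (\<lambda>i. E i + exponent_shift m i) =
    word_coeff m' E * word_coeff m (\<lambda>i. E i + exponent_shift m' i)"
proof -
  define e where "e i = nat (E i)" for i
  have "0 \<le> E i" for i
    using assms(2)[rule_format, of i] by simp
  then have E: "E = int \<circ> e"
    by (simp add: e_def fun_eq_iff)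
  have "length m + length m' \<le> e i" for i
    using assms(2)[rule_format, of i] by (simp add: e_def le_nat_iff)
  then have "\<forall>i. length m + length m' \<le> e i" "\<forall>i. length m' + length m \<le> e i"
    by (simp_all add: add.commute)
  moreover have "weyl_op m (weyl_op m' (\<lambda>_. 1)) e = weyl_op m' (weyl_op m (\<lambda>_. 1)) e"
    using assms(1) unfolding comm_zero_def weyl_comm_def by (metis eq_iff_diff_eq_0)
  ultimately show ?thesis
    unfolding E by (simp add: weyl_op_weyl_op_large flip: of_int_mult)
qed

theorem comm_zero_imp_mdeg_cross_eq:
  assumes "comm_zero m m'"
  shows "mdeg_beta m j * mdeg_alpha m' j = mdeg_alpha m j * mdeg_beta m' j"
proof -
  define L where "L = int (length m + length m')"
  define E0 :: "nat \<Rightarrow> int" where "E0 = (\<lambda>_. L)"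
  define R where "R = ann_roots m j"
  define R' where "R' = ann_roots m' j"
  define s where "s = exponent_shift m j"
  define s' where "s' = exponent_shift m' j"
  let ?rest = "\<lambda>m. word_coeff (filter (\<lambda>g. gen_index g \<noteq> j) m)"
  define A where "A = ?rest m E0 * ?rest m' (\<lambda>i. E0 i + exponent_shift m i)"
  define B where "B = ?rest m' E0 * ?rest m (\<lambda>i. E0 i + exponent_shift m' i)"
  have "A * (\<Prod>k\<leftarrow>R @ map (\<lambda>k. s + k) R'. x + k) = B * (\<Prod>k\<leftarrow>R' @ map (\<lambda>k. s' + k) R. x + k)"
    if "x \<in> {L..}" for x
  proof -
    have "\<forall>i. L \<le> (E0(j := x)) i"
      using that by (simp add: E0_def)
    moreover have "(\<lambda>i. (E0(j := x)) i + exponent_shift n i) =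
        (\<lambda>i. E0 i + exponent_shift n i)(j := x + exponent_shift n j)" for n
      by auto
    ultimately show ?thesis
      using comm_zero_imp_word_coeff_eq[OF assms, of "E0(j := x)"]
      by (simp add: L_def word_coeff_fun_upd A_def B_def R_def R'_def s_def s'_def o_def algebra_simps)
  qed
  moreover have "A \<noteq> 0"
  proof -
    have len: "int (length (filter (\<lambda>g. gen_index g \<noteq> j) n)) \<le> int (length n)" for n
      by simp
    have "0 < ?rest m E0"
    proof (intro word_coeff_pos allI)
      fix i
      show "int (length (filter (\<lambda>g. gen_index g \<noteq> j) m)) \<le> E0 i"
        using len[of m] unfolding E0_def L_def of_nat_add by linarith
    qed
    moreover have "0 < ?rest m' (\<lambda>i. E0 i + exponent_shift m i)"
    proof (intro word_coeff_pos allI)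
      fix i
      show "int (length (filter (\<lambda>g. gen_index g \<noteq> j) m')) \<le> E0 i + exponent_shift m i"
        using len[of m'] abs_exponent_shift_le[of m i] unfolding E0_def L_def of_nat_add by linarith
    qed
    ultimately show ?thesis
      by (simp add: A_def)
  qed
  ultimately have "mset (R @ map (\<lambda>k. s + k) R') = mset (R' @ map (\<lambda>k. s' + k) R)"
    by (intro mset_eq_if_linear_factors_eq[of "{L..}" A _ B]) (auto simp: infinite_Ici)
  then have "sum_list (R @ map (\<lambda>k. s + k) R') = sum_list (R' @ map (\<lambda>k. s' + k) R)"
    by (metis sum_mset_sum_list)
  then have "int (length R') * s = int (length R) * s'"
    by (simp add: sum_list_addf sum_list_triv)
  then show ?thesis
    by (simp add: R_def R'_def s_def s'_def length_ann_roots exponent_shift_def algebra_simps flip: of_nat_mult)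
qed

lemma weyl_op_balanced:
  "\<forall>i. exponent_shift m i = 0 \<Longrightarrow> weyl_op m f e = of_int (word_coeff m (int \<circ> e)) * f e"
  by (subst weyl_op_eq) simp

lemma comm_zero_if_balanced:
  assumes "\<forall>i. exponent_shift m' i = 0" and "\<forall>i\<in>gen_index ` set m'. exponent_shift m i = 0"
  shows "comm_zero m m'"
proof -
  have "weyl_op m (weyl_op m' f) e = weyl_op m' (weyl_op m f) e" for f e
  proof (cases "\<forall>i. 0 \<le> int (e i) + exponent_shift m i")
    case True
    define e1 where "e1 = (\<lambda>i. nat (int (e i) + exponent_shift m i))"
    have "word_coeff m' (int \<circ> e1) = word_coeff m' (int \<circ> e)"
      using True assms(2) by (intro word_coeff_cong) (simp add: e1_def)
    with True show ?thesis
      by (simp add: weyl_op_eq[of m] weyl_op_balanced[OF assms(1)] e1_def)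
  next
    case False
    then have "weyl_op m g e = 0" for g
      by (simp only: weyl_op_eq[of m g e] if_False)
    then show ?thesis
      by (simp add: weyl_op_balanced[OF assms(1)])
  qed
  then show ?thesis
    by (simp add: comm_zero_def weyl_comm_def)
qed

lemma mdeg_pos_iff: "0 < mdeg_alpha m j + mdeg_beta m j \<longleftrightarrow> j \<in> gen_index ` set m"
proof (induction m)
  case (Cons g m)
  then show ?case
    by (cases g) (auto simp: mdeg_alpha_def mdeg_beta_def)
qed (simp add: mdeg_alpha_def mdeg_beta_def)

lemma comm_zero_if_balanced_on_support:
  assumes "is_monomial n m'" and "\<forall>j<n. mdeg_alpha m' j = mdeg_beta m' j"
    and "\<forall>j<n. mdeg_alpha m' j \<noteq> 0 \<longrightarrow> mdeg_alpha m j = mdeg_beta m j"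
  shows "comm_zero m m'"
proof (rule comm_zero_if_balanced)
  have support: "j < n" if "j \<in> gen_index ` set m'" for j
    using assms(1) that by (auto simp: is_monomial_def)
  show "\<forall>j. exponent_shift m' j = 0"
  proof
    fix j
    show "exponent_shift m' j = 0"
    proof (cases "j < n")
      case True
      with assms(2) show ?thesis
        by (simp add: exponent_shift_def)
    next
      case False
      then have "j \<notin> gen_index ` set m'"
        using support by blast
      then show ?thesis
        using mdeg_pos_iff[of m' j] by (simp add: exponent_shift_def)
    qed
  qed
  show "\<forall>j\<in>gen_index ` set m'. exponent_shift m j = 0"
  proof
    fix j
    assume "j \<in> gen_index ` set m'"
    then have "j < n" and "mdeg_alpha m' j \<noteq> 0"
      using support assms(2) mdeg_pos_iff[of m' j] by auto
    with assms(3) show "exponent_shift m j = 0"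
      by (simp add: exponent_shift_def)
  qed
qed

lemma comm_zero_imp_balanced:
  assumes "comm_zero m m'" and "mdeg_alpha m' j = mdeg_beta m' j" and "mdeg_alpha m' j \<noteq> 0"
  shows "mdeg_alpha m j = mdeg_beta m j"
  using comm_zero_imp_mdeg_cross_eq[OF assms(1), of j] assms(2,3) by simp

theorem corollary1:
  shows
   "(\<forall>m mh. is_monomial 1 m \<and> is_monomial 1 mh \<longrightarrow>
       (comm_zero m mh \<longrightarrow>
          mdeg_beta m 0 * mdeg_alpha mh 0 = mdeg_alpha m 0 * mdeg_beta mh 0)
     \<and> (mdeg_alpha mh 0 = mdeg_beta mh 0 \<and> mdeg_beta mh 0 \<noteq> 0 \<and> comm_zero m mh \<longrightarrow>
          mdeg_alpha m 0 = mdeg_beta m 0))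
  \<and> (\<forall>n m mh. n \<ge> 1 \<and> is_monomial n m \<and> is_monomial n mh \<longrightarrow>
       (comm_zero m mh \<longrightarrow>
          (\<forall>j<n. mdeg_beta m j * mdeg_alpha mh j = mdeg_alpha m j * mdeg_beta mh j))
     \<and> ((\<forall>j<n. mdeg_alpha mh j = mdeg_beta mh j) \<and> comm_zero m mh \<longrightarrow>
          (\<forall>j<n. mdeg_alpha mh j \<noteq> 0 \<longrightarrow> mdeg_alpha m j = mdeg_beta m j)))
  \<and> (\<forall>n m mt. n \<ge> 1 \<and> is_monomial n m \<and> is_monomial n mt
       \<and> (\<forall>j<n. mdeg_alpha mt j = mdeg_beta mt j) \<longrightarrow>
       (comm_zero m mt \<longleftrightarrow>
          (\<forall>j<n. mdeg_alpha mt j \<noteq> 0 \<longrightarrow> mdeg_alpha m j = mdeg_beta m j)))"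
  by (auto intro: comm_zero_imp_mdeg_cross_eq comm_zero_imp_balanced comm_zero_if_balanced_on_support)

end
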